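(* Let $N\ge1$, let real channel gains $a_{s,r},a_{s,j},a_{r,j}$ ($j=1,\dots,N$) be fixed, and for powers $\mathbf{P}=(P_s,P_r)\in[0,\infty)^2$ set $\mathsf{SNR}_{s,r}=a_{s,r}^2P_s$, $\mathsf{SNR}_{s,j}=a_{s,j}^2P_s$, $\mathsf{SNR}_{r,j}=a_{r,j}^2P_r$, and $\mathbf{S}(\mathbf{P})=(\mathsf{SNR}_{s,r},\mathsf{SNR}_{s,1},\dots,\mathsf{SNR}_{s,N},\mathsf{SNR}_{r,1},\dots,\mathsf{SNR}_{r,N})$. With $\mathsf{C}(x)=\tfrac12\log(1+x)$, $f_j(\rho,\mathbf{S})=\mathsf{SNR}_{s,j}+\mathsf{SNR}_{r,j}+2\rho\sqrt{\mathsf{SNR}_{s,j}\mathsf{SNR}_{r,j}}$, $g_j(\rho,\mathbf{S})=(1-\rho^2)(\mathsf{SNR}_{s,j}+\mathsf{SNR}_{s,r})$ and $R_{CS}(\rho,\mathbf{S})=\min_{1\le j\le N}\min(\mathsf{C}(f_j(\rho,\mathbf{S})),\mathsf{C}(g_j(\rho,\mathbf{S})))$, the map $(t,\mathbf{P})\mapsto R_{CS}(\sqrt t,\mathbf{S}(\mathbf{P}))$ is quasi-concave on $[0,1]\times[0,\infty)^2$ (i.e., $R_{CS}(\rho,\mathbf{S}(\mathbf{P}))$ is quasi-concave in $(\rho^2,\mathbf{P})$).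
   Context: Setting: real AWGN multicast relay channel with source $s$, relay $r$ and destinations $1,\dots,N$; $\rho\in[0,1]$ is the source–relay input correlation coefficient. A function $F$ on a convex set is quasi-concave if $F(\lambda x_1+(1-\lambda)x_2)\ge\min(F(x_1),F(x_2))$ for all $x_1,x_2$ and $\lambda\in[0,1]$. *)

theory Defs
  imports "HOL-Analysis.Analysis"
begin

definition quasi_concave_on :: "'a::real_vector set \<Rightarrow> ('a \<Rightarrow> real) \<Rightarrow> bool" where
  "quasi_concave_on S F \<longleftrightarrow>
     (\<forall>x1\<in>S. \<forall>x2\<in>S. \<forall>u::real. 0 \<le> u \<and> u \<le> 1 \<longrightarrow>
        F (u *\<^sub>R x1 + (1 - u) *\<^sub>R x2) \<ge> min (F x1) (F x2))"

definition Cap :: "real \<Rightarrow> real" where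
  "Cap x = (1/2) * log 2 (1 + x)"

definition f_j :: "real \<Rightarrow> real \<Rightarrow> real \<Rightarrow> real" where
  "f_j \<rho> snr_sj snr_rj = snr_sj + snr_rj + 2 * \<rho> * sqrt (snr_sj * snr_rj)"

definition g_j :: "real \<Rightarrow> real \<Rightarrow> real \<Rightarrow> real" where
  "g_j \<rho> snr_sj snr_sr = (1 - \<rho>^2) * (snr_sj + snr_sr)"

definition R_CS :: "nat \<Rightarrow> real \<Rightarrow> real \<times> (nat \<Rightarrow> real) \<times> (nat \<Rightarrow> real) \<Rightarrow> real" where
  "R_CS N \<rho> S = (case S of (snr_sr, snr_s, snr_r) \<Rightarrow>
     Min ((\<lambda>j. min (Cap (f_j \<rho> (snr_s j) (snr_r j))) (Cap (g_j \<rho> (snr_s j) snr_sr))) ` {1..N}))"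

definition SNR_vec :: "real \<Rightarrow> (nat \<Rightarrow> real) \<Rightarrow> (nat \<Rightarrow> real) \<Rightarrow> real \<Rightarrow> real
    \<Rightarrow> real \<times> (nat \<Rightarrow> real) \<times> (nat \<Rightarrow> real)" where
  "SNR_vec a_sr a_s a_r Ps Pr = (a_sr^2 * Ps, (\<lambda>j. (a_s j)^2 * Ps), (\<lambda>j. (a_r j)^2 * Pr))"

end

theory Submission
  imports Defs
begin

text \<open>
  Minima, finite minima and composition with the increasing map Cap preserve quasi-concavity, so it
  suffices to treat f_j and g_j separately. Up to a nonnegative factor, g_j is (1 - t) * P, a product
  of two nonnegative affine functions, which is quasi-concave by AM-GM.

  For f_j pass to square-root coordinates w = sqrt t, a = sqrt X, b = sqrt Y, in which
  f_j = a^2 + b^2 + 2 w a b. Two Lagrange identities and Cauchy-Schwarz bound f_j at the convex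
  combination from below by u h1 + (1 - u) h2 + 2 u (1 - u) E, where h1, h2 are its values at the
  two points and E = |w1 - w2| |a1 b2 - a2 b1| - (w1 - w2) (a1 b1 - a2 b2). For w2 \<le> w1 the
  cross term E can only be negative if a1 b1 - a2 b2 > |a1 b2 - a2 b1|, which forces a2 \<le> a1 and
  b2 \<le> b1; then the second point is dominated componentwise and monotonicity of f_j finishes the
  argument.
\<close>

lemma quasi_concave_on_tripleI:
  fixes S :: "(real \<times> real \<times> real) set"
  assumes "\<And>t1 P1 Q1 t2 P2 Q2 u. (t1, P1, Q1) \<in> S \<Longrightarrow> (t2, P2, Q2) \<in> S \<Longrightarrow> 0 \<le> u \<Longrightarrow> u \<le> 1 \<Longrightarrow>
      min (F (t1, P1, Q1)) (F (t2, P2, Q2))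
        \<le> F (u * t1 + (1 - u) * t2, u * P1 + (1 - u) * P2, u * Q1 + (1 - u) * Q2)"
  shows "quasi_concave_on S F"
  unfolding quasi_concave_on_def using assms by force

lemma quasi_concave_on_mono_comp:
  assumes "convex S" "mono_on T \<phi>" "F ` S \<subseteq> T" "quasi_concave_on S F"
  shows "quasi_concave_on S (\<lambda>x. \<phi> (F x))"
  unfolding quasi_concave_on_def
proof (intro ballI allI impI)
  fix x1 x2 and u :: real
  assume x: "x1 \<in> S" "x2 \<in> S" and u: "0 \<le> u \<and> u \<le> 1"
  let ?c = "u *\<^sub>R x1 + (1 - u) *\<^sub>R x2"
  have "?c \<in> S" using \<open>convex S\<close> x u by (simp add: convex_def)
  have "min (F x1) (F x2) \<le> F ?c"
    using \<open>quasi_concave_on S F\<close> x u by (simp add: quasi_concave_on_def)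
  moreover have "min (F x1) (F x2) \<in> T" "F ?c \<in> T"
    using x \<open>?c \<in> S\<close> assms(3) by (auto simp: min_def)
  ultimately have "\<phi> (min (F x1) (F x2)) \<le> \<phi> (F ?c)"
    using \<open>mono_on T \<phi>\<close> by (simp add: mono_onD)
  then show "min (\<phi> (F x1)) (\<phi> (F x2)) \<le> \<phi> (F ?c)"
    by (simp add: min_def split: if_splits)
qed

lemma quasi_concave_on_min:
  assumes "quasi_concave_on S F" "quasi_concave_on S G"
  shows "quasi_concave_on S (\<lambda>x. min (F x) (G x))"
  using assms unfolding quasi_concave_on_def by (smt (verit))

lemma quasi_concave_on_Min:
  assumes "finite J" "J \<noteq> {}" "\<And>j. j \<in> J \<Longrightarrow> quasi_concave_on S (F j)"
  shows "quasi_concave_on S (\<lambda>x. Min ((\<lambda>j. F j x) ` J))"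
  unfolding quasi_concave_on_def
proof (intro ballI allI impI)
  fix x1 x2 and u :: real
  assume x: "x1 \<in> S" "x2 \<in> S" and u: "0 \<le> u \<and> u \<le> 1"
  have "min (Min ((\<lambda>j. F j x1) ` J)) (Min ((\<lambda>j. F j x2) ` J)) \<le> F j (u *\<^sub>R x1 + (1 - u) *\<^sub>R x2)"
    if "j \<in> J" for j
  proof -
    have "Min ((\<lambda>j. F j x1) ` J) \<le> F j x1" "Min ((\<lambda>j. F j x2) ` J) \<le> F j x2"
      using \<open>finite J\<close> that by auto
    moreover have "min (F j x1) (F j x2) \<le> F j (u *\<^sub>R x1 + (1 - u) *\<^sub>R x2)"
      using assms(3)[OF that] x u by (simp add: quasi_concave_on_def)
    ultimately show ?thesis by linarith
  qed
  then show "min (Min ((\<lambda>j. F j x1) ` J)) (Min ((\<lambda>j. F j x2) ` J))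
      \<le> Min ((\<lambda>j. F j (u *\<^sub>R x1 + (1 - u) *\<^sub>R x2)) ` J)"
    using assms(1,2) by (simp add: Min_ge_iff)
qed

lemma mono_on_Cap: "mono_on {0..} Cap"
  by (rule mono_onI) (simp add: Cap_def)

lemma f_j_nonneg: "0 \<le> \<rho> \<Longrightarrow> 0 \<le> X \<Longrightarrow> 0 \<le> Y \<Longrightarrow> 0 \<le> f_j \<rho> X Y"
  by (simp add: f_j_def)

lemma f_j_mono:
  assumes "0 \<le> \<rho>" "\<rho> \<le> \<rho>'" "0 \<le> X" "X \<le> X'" "0 \<le> Y" "Y \<le> Y'"
  shows "f_j \<rho> X Y \<le> f_j \<rho>' X' Y'"
proof -
  have "sqrt (X * Y) \<le> sqrt (X' * Y')"
    using assms by (intro real_sqrt_le_mono mult_mono) auto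
  then have "\<rho> * sqrt (X * Y) \<le> \<rho>' * sqrt (X' * Y')"
    using assms by (intro mult_mono) auto
  then show ?thesis using assms by (simp add: f_j_def)
qed

lemma f_j_convex_comb_lower_bound:
  fixes w1 w2 a1 a2 b1 b2 u :: real
  assumes "0 \<le> w1" "0 \<le> w2" "0 \<le> a1" "0 \<le> a2" "0 \<le> b1" "0 \<le> b2" "0 \<le> u" "u \<le> 1"
  shows "u * (a1\<^sup>2 + b1\<^sup>2 + 2 * w1 * (a1 * b1)) + (1 - u) * (a2\<^sup>2 + b2\<^sup>2 + 2 * w2 * (a2 * b2))
           + 2 * u * (1 - u) * (\<bar>w1 - w2\<bar> * \<bar>a1 * b2 - a2 * b1\<bar> - (w1 - w2) * (a1 * b1 - a2 * b2))
         \<le> f_j (sqrt (u * w1\<^sup>2 + (1 - u) * w2\<^sup>2)) (u * a1\<^sup>2 + (1 - u) * a2\<^sup>2) (u * b1\<^sup>2 + (1 - u) * b2\<^sup>2)"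
proof -
  define v where "v = 1 - u"
  have "0 \<le> v" using assms by (simp add: v_def)
  define S \<Gamma> \<Delta> D where "S = u * w1 + v * w2" and "\<Gamma> = u * (a1 * b1) + v * (a2 * b2)"
    and "\<Delta> = w1 - w2" and "D = a1 * b2 - a2 * b1"
  have W: "u * w1\<^sup>2 + v * w2\<^sup>2 = S\<^sup>2 + u * v * \<bar>\<Delta>\<bar>\<^sup>2"
    by (simp add: S_def \<Delta>_def v_def power2_eq_square algebra_simps)
  have AB: "(u * a1\<^sup>2 + v * a2\<^sup>2) * (u * b1\<^sup>2 + v * b2\<^sup>2) = \<Gamma>\<^sup>2 + u * v * \<bar>D\<bar>\<^sup>2"
    by (simp add: \<Gamma>_def D_def v_def power2_eq_square algebra_simps)
  have "(S * \<Gamma> + u * v * (\<bar>\<Delta>\<bar> * \<bar>D\<bar>))\<^sup>2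
        = (S\<^sup>2 + u * v * \<bar>\<Delta>\<bar>\<^sup>2) * (\<Gamma>\<^sup>2 + u * v * \<bar>D\<bar>\<^sup>2) - u * v * (S * \<bar>D\<bar> - \<Gamma> * \<bar>\<Delta>\<bar>)\<^sup>2"
    by (simp add: power2_eq_square algebra_simps)
  also have "\<dots> \<le> (S\<^sup>2 + u * v * \<bar>\<Delta>\<bar>\<^sup>2) * (\<Gamma>\<^sup>2 + u * v * \<bar>D\<bar>\<^sup>2)"
    using \<open>0 \<le> u\<close> \<open>0 \<le> v\<close> by simp
  finally have cauchy_schwarz:
    "S * \<Gamma> + u * v * (\<bar>\<Delta>\<bar> * \<bar>D\<bar>) \<le> sqrt (S\<^sup>2 + u * v * \<bar>\<Delta>\<bar>\<^sup>2) * sqrt (\<Gamma>\<^sup>2 + u * v * \<bar>D\<bar>\<^sup>2)"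
    by (simp add: real_le_rsqrt real_sqrt_mult[symmetric])
  have "S * \<Gamma> = u * w1 * (a1 * b1) + v * w2 * (a2 * b2) - u * v * \<Delta> * (a1 * b1 - a2 * b2)"
    by (simp add: S_def \<Gamma>_def \<Delta>_def v_def algebra_simps)
  then have "u * (a1\<^sup>2 + b1\<^sup>2 + 2 * w1 * (a1 * b1)) + v * (a2\<^sup>2 + b2\<^sup>2 + 2 * w2 * (a2 * b2))
             + 2 * u * v * (\<bar>\<Delta>\<bar> * \<bar>D\<bar> - \<Delta> * (a1 * b1 - a2 * b2))
           = (u * a1\<^sup>2 + v * a2\<^sup>2) + (u * b1\<^sup>2 + v * b2\<^sup>2) + 2 * (S * \<Gamma> + u * v * (\<bar>\<Delta>\<bar> * \<bar>D\<bar>))"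
    by (simp add: v_def algebra_simps)
  also have "\<dots> \<le> f_j (sqrt (u * w1\<^sup>2 + v * w2\<^sup>2)) (u * a1\<^sup>2 + v * a2\<^sup>2) (u * b1\<^sup>2 + v * b2\<^sup>2)"
    unfolding f_j_def W AB using cauchy_schwarz by simp
  finally show ?thesis by (simp add: v_def \<Delta>_def D_def)
qed

lemma le_of_abs_det_less:
  fixes a1 a2 b1 b2 :: real
  assumes "0 \<le> a1" "0 \<le> a2" "0 \<le> b1" "0 \<le> b2" and less: "\<bar>a1 * b2 - a2 * b1\<bar> < a1 * b1 - a2 * b2"
  shows "a2 \<le> a1" "b2 \<le> b1"
proof -
  have "0 < (a1 * b1 - a2 * b2) + (a1 * b2 - a2 * b1)" "0 < (a1 * b1 - a2 * b2) - (a1 * b2 - a2 * b1)"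
    using less by linarith+
  then have "0 < (b1 + b2) * (a1 - a2)" "0 < (a1 + a2) * (b1 - b2)"
    by (simp_all add: algebra_simps)
  then show "a2 \<le> a1" "b2 \<le> b1"
    using assms(1-4) by (simp_all add: zero_less_mult_iff)
qed

lemma le_convex_comb_of_le:
  fixes x1 x2 u :: real
  assumes "x2 \<le> x1" "0 \<le> u"
  shows "x2 \<le> u * x1 + (1 - u) * x2"
  using mult_left_mono[OF assms] by (simp add: algebra_simps)

lemma f_j_sq_min_le_convex_comb_of_le:
  fixes w1 w2 a1 a2 b1 b2 u :: real
  assumes nonneg: "0 \<le> w1" "0 \<le> w2" "0 \<le> a1" "0 \<le> a2" "0 \<le> b1" "0 \<le> b2"
    and u: "0 \<le> u" "u \<le> 1" and le: "w2 \<le> w1"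
  shows "min (f_j w1 (a1\<^sup>2) (b1\<^sup>2)) (f_j w2 (a2\<^sup>2) (b2\<^sup>2))
           \<le> f_j (sqrt (u * w1\<^sup>2 + (1 - u) * w2\<^sup>2)) (u * a1\<^sup>2 + (1 - u) * a2\<^sup>2) (u * b1\<^sup>2 + (1 - u) * b2\<^sup>2)"
    (is "min ?h1 ?h2 \<le> ?rhs")
proof -
  consider "a1 * b1 - a2 * b2 \<le> \<bar>a1 * b2 - a2 * b1\<bar>" | "\<bar>a1 * b2 - a2 * b1\<bar> < a1 * b1 - a2 * b2"
    by linarith
  then show ?thesis
  proof cases
    case 1
    have h: "f_j w (a\<^sup>2) (b\<^sup>2) = a\<^sup>2 + b\<^sup>2 + 2 * w * (a * b)" if "0 \<le> a" "0 \<le> b" for w a b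
      using that by (simp add: f_j_def real_sqrt_mult)
    have "min ?h1 ?h2 \<le> u * ?h1 + (1 - u) * ?h2"
      using u mult_left_mono[of "min ?h1 ?h2" ?h1 u] mult_left_mono[of "min ?h1 ?h2" ?h2 "1 - u"]
      by (simp add: algebra_simps)
    also have "\<dots> \<le> u * ?h1 + (1 - u) * ?h2 + 2 * u * (1 - u)
                 * (\<bar>w1 - w2\<bar> * \<bar>a1 * b2 - a2 * b1\<bar> - (w1 - w2) * (a1 * b1 - a2 * b2))"
      using 1 le u by (simp add: mult_left_mono)
    also have "\<dots> \<le> ?rhs"
      using f_j_convex_comb_lower_bound[OF nonneg u] nonneg by (simp add: h)
    finally show ?thesis .
  next
    case 2
    have "a2\<^sup>2 \<le> a1\<^sup>2" "b2\<^sup>2 \<le> b1\<^sup>2"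
      using le_of_abs_det_less[OF nonneg(3-6) 2] nonneg by (simp_all add: power_mono)
    moreover have "w2\<^sup>2 \<le> w1\<^sup>2"
      using le nonneg by (simp add: power_mono)
    ultimately have "?h2 \<le> ?rhs"
      using nonneg u by (intro f_j_mono real_le_rsqrt le_convex_comb_of_le) auto
    then show ?thesis by simp
  qed
qed

lemma f_j_min_le_convex_comb:
  fixes t1 t2 X1 X2 Y1 Y2 u :: real
  assumes "0 \<le> t1" "0 \<le> t2" "0 \<le> X1" "0 \<le> X2" "0 \<le> Y1" "0 \<le> Y2" "0 \<le> u" "u \<le> 1"
  shows "min (f_j (sqrt t1) X1 Y1) (f_j (sqrt t2) X2 Y2)
           \<le> f_j (sqrt (u * t1 + (1 - u) * t2)) (u * X1 + (1 - u) * X2) (u * Y1 + (1 - u) * Y2)"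
proof (cases "t2 \<le> t1")
  case True
  then show ?thesis
    using f_j_sq_min_le_convex_comb_of_le[of "sqrt t1" "sqrt t2" "sqrt X1" "sqrt X2" "sqrt Y1" "sqrt Y2" u]
      assms by simp
next
  case False
  then have "min (f_j (sqrt t2) X2 Y2) (f_j (sqrt t1) X1 Y1)
           \<le> f_j (sqrt ((1 - u) * t2 + (1 - (1 - u)) * t1))
                 ((1 - u) * X2 + (1 - (1 - u)) * X1) ((1 - u) * Y2 + (1 - (1 - u)) * Y1)"
    using f_j_sq_min_le_convex_comb_of_le[of "sqrt t2" "sqrt t1" "sqrt X2" "sqrt X1" "sqrt Y2" "sqrt Y1" "1 - u"]
      assms by simp
  then show ?thesis by (simp add: min.commute add.commute)
qed

lemma min_mult_le_convex_comb:
  fixes \<alpha>1 \<alpha>2 \<beta>1 \<beta>2 u :: real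
  assumes "0 \<le> \<alpha>1" "0 \<le> \<alpha>2" "0 \<le> \<beta>1" "0 \<le> \<beta>2" "0 \<le> u" "u \<le> 1"
  shows "min (\<alpha>1 * \<beta>1) (\<alpha>2 * \<beta>2) \<le> (u * \<alpha>1 + (1 - u) * \<alpha>2) * (u * \<beta>1 + (1 - u) * \<beta>2)"
proof -
  define m where "m = min (\<alpha>1 * \<beta>1) (\<alpha>2 * \<beta>2)"
  have "m * m \<le> (\<alpha>1 * \<beta>1) * (\<alpha>2 * \<beta>2)"
    unfolding m_def using assms by (intro mult_mono) auto
  then have "m \<le> sqrt ((\<alpha>1 * \<beta>2) * (\<alpha>2 * \<beta>1))"
    by (intro real_le_rsqrt) (simp add: power2_eq_square algebra_simps)
  also have "\<dots> \<le> (\<alpha>1 * \<beta>2 + \<alpha>2 * \<beta>1) / 2"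
    using assms by (intro arith_geo_mean_sqrt) auto
  finally have cross: "2 * m \<le> \<alpha>1 * \<beta>2 + \<alpha>2 * \<beta>1" by simp
  have "m = u\<^sup>2 * m + (1 - u)\<^sup>2 * m + u * (1 - u) * (2 * m)"
    by (simp add: power2_eq_square algebra_simps)
  also have "\<dots> \<le> u\<^sup>2 * (\<alpha>1 * \<beta>1) + (1 - u)\<^sup>2 * (\<alpha>2 * \<beta>2) + u * (1 - u) * (\<alpha>1 * \<beta>2 + \<alpha>2 * \<beta>1)"
    using assms cross by (intro add_mono mult_left_mono) (auto simp: m_def)
  also have "\<dots> = (u * \<alpha>1 + (1 - u) * \<alpha>2) * (u * \<beta>1 + (1 - u) * \<beta>2)"
    by (simp add: power2_eq_square algebra_simps)
  finally show ?thesis by (simp add: m_def)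
qed

lemma quasi_concave_on_f_j:
  fixes \<alpha> \<beta> :: real
  assumes "0 \<le> \<alpha>" "0 \<le> \<beta>"
  shows "quasi_concave_on ({0..1} \<times> {0..} \<times> {0..}) (\<lambda>(t, P, Q). f_j (sqrt t) (\<alpha> * P) (\<beta> * Q))"
proof (rule quasi_concave_on_tripleI)
  fix t1 P1 Q1 t2 P2 Q2 u :: real
  assume "(t1, P1, Q1) \<in> {0..1} \<times> {0..} \<times> {0..}" "(t2, P2, Q2) \<in> {0..1} \<times> {0..} \<times> {0..}"
    and "0 \<le> u" "u \<le> 1"
  then have "min (f_j (sqrt t1) (\<alpha> * P1) (\<beta> * Q1)) (f_j (sqrt t2) (\<alpha> * P2) (\<beta> * Q2))
      \<le> f_j (sqrt (u * t1 + (1 - u) * t2)) (u * (\<alpha> * P1) + (1 - u) * (\<alpha> * P2)) (u * (\<beta> * Q1) + (1 - u) * (\<beta> * Q2))"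
    using assms by (intro f_j_min_le_convex_comb) auto
  then show "min ((\<lambda>(t, P, Q). f_j (sqrt t) (\<alpha> * P) (\<beta> * Q)) (t1, P1, Q1))
                 ((\<lambda>(t, P, Q). f_j (sqrt t) (\<alpha> * P) (\<beta> * Q)) (t2, P2, Q2))
      \<le> (\<lambda>(t, P, Q). f_j (sqrt t) (\<alpha> * P) (\<beta> * Q))
           (u * t1 + (1 - u) * t2, u * P1 + (1 - u) * P2, u * Q1 + (1 - u) * Q2)"
    by (simp add: algebra_simps)
qed

lemma quasi_concave_on_g_j:
  fixes \<alpha> \<beta> :: real
  assumes "0 \<le> \<alpha>" "0 \<le> \<beta>"
  shows "quasi_concave_on ({0..1} \<times> {0..} \<times> {0..}) (\<lambda>(t, P, Q :: real). g_j (sqrt t) (\<alpha> * P) (\<beta> * P))"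
proof (rule quasi_concave_on_tripleI)
  fix t1 P1 Q1 t2 P2 Q2 u :: real
  assume box: "(t1, P1, Q1) \<in> {0..1} \<times> {0..} \<times> {0..}" "(t2, P2, Q2) \<in> {0..1} \<times> {0..} \<times> {0..}"
    and u: "0 \<le> u" "u \<le> 1"
  have g: "g_j (sqrt t) (\<alpha> * P) (\<beta> * P) = (1 - t) * ((\<alpha> + \<beta>) * P)" if "0 \<le> t" for t P
    using that by (simp add: g_j_def algebra_simps)
  have "0 \<le> u * t1 + (1 - u) * t2" using box u by simp
  have "min (g_j (sqrt t1) (\<alpha> * P1) (\<beta> * P1)) (g_j (sqrt t2) (\<alpha> * P2) (\<beta> * P2))
      = min ((1 - t1) * ((\<alpha> + \<beta>) * P1)) ((1 - t2) * ((\<alpha> + \<beta>) * P2))"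
    using box by (simp add: g)
  also have "\<dots> \<le> (u * (1 - t1) + (1 - u) * (1 - t2)) * (u * ((\<alpha> + \<beta>) * P1) + (1 - u) * ((\<alpha> + \<beta>) * P2))"
    using assms box u by (intro min_mult_le_convex_comb) auto
  also have "\<dots> = g_j (sqrt (u * t1 + (1 - u) * t2)) (\<alpha> * (u * P1 + (1 - u) * P2)) (\<beta> * (u * P1 + (1 - u) * P2))"
    unfolding g[OF \<open>0 \<le> u * t1 + (1 - u) * t2\<close>] by (simp add: algebra_simps)
  finally show "min ((\<lambda>(t, P, Q). g_j (sqrt t) (\<alpha> * P) (\<beta> * P)) (t1, P1, Q1))
                 ((\<lambda>(t, P, Q). g_j (sqrt t) (\<alpha> * P) (\<beta> * P)) (t2, P2, Q2))
      \<le> (\<lambda>(t, P, Q). g_j (sqrt t) (\<alpha> * P) (\<beta> * P))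
           (u * t1 + (1 - u) * t2, u * P1 + (1 - u) * P2, u * Q1 + (1 - u) * Q2)"
    by simp
qed

theorem corollary1:
  fixes N :: nat and a_sr :: real and a_s a_r :: "nat \<Rightarrow> real"
  assumes "N \<ge> 1"
  shows "quasi_concave_on ({0..1} \<times> {0..} \<times> {0..})
           (\<lambda>(t, Ps, Pr). R_CS N (sqrt t) (SNR_vec a_sr a_s a_r Ps Pr))"
proof -
  let ?S = "{0..1::real} \<times> {0::real..} \<times> {0::real..}"
  let ?f = "\<lambda>j (t, Ps, Pr). f_j (sqrt t) ((a_s j)\<^sup>2 * Ps) ((a_r j)\<^sup>2 * Pr)"
  let ?g = "\<lambda>j (t, Ps, Pr :: real). g_j (sqrt t) ((a_s j)\<^sup>2 * Ps) (a_sr\<^sup>2 * Ps)"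
  have "convex ?S" by (intro convex_Times) auto
  have "?f j ` ?S \<subseteq> {0..}" "?g j ` ?S \<subseteq> {0..}" for j
    by (auto simp: f_j_nonneg g_j_def)
  then have "quasi_concave_on ?S (\<lambda>X. min (Cap (?f j X)) (Cap (?g j X)))" for j
    by (intro quasi_concave_on_min quasi_concave_on_mono_comp[OF \<open>convex ?S\<close> mono_on_Cap]
        quasi_concave_on_f_j quasi_concave_on_g_j) auto
  then have "quasi_concave_on ?S (\<lambda>X. Min ((\<lambda>j. min (Cap (?f j X)) (Cap (?g j X))) ` {1..N}))"
    using assms by (intro quasi_concave_on_Min) auto
  moreover have "(\<lambda>(t, Ps, Pr). R_CS N (sqrt t) (SNR_vec a_sr a_s a_r Ps Pr))
      = (\<lambda>X. Min ((\<lambda>j. min (Cap (?f j X)) (Cap (?g j X))) ` {1..N}))"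
    by (auto simp: R_CS_def SNR_vec_def)
  ultimately show ?thesis by simp
qed

end
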